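(* Let $r\ge 3$, $\varepsilon>0$, and let $G$ be an $n$-vertex maximal $K_r$-free graph with minimum degree $\delta(G)\ge\left(\frac{2r-5}{2r-3}+\varepsilon\right)n$. Then $G$ is $\varepsilon^{r-2}$-ultra maximal $K_r$-free.
   Context: An $n$-vertex graph $G$ is $\alpha$-ultra maximal $K_r$-free if it is $K_r$-free and for every pair of non-adjacent vertices $u,v$, the induced subgraph $G[N(u)\cap N(v)]$ contains at least $\alpha n^{r-2}$ copies of $K_{r-2}$. A graph is maximal $K_r$-free if it is $K_r$-free and adding any new edge creates a $K_r$. *)

theory Defs
  imports Complex_Main
begin

definition graph :: "'a set \<Rightarrow> ('a \<Rightarrow> 'a \<Rightarrow> bool) \<Rightarrow> bool" where
  "graph V E \<longleftrightarrow> finite V \<and> (\<forall>u v. E u v \<longrightarrow> u \<in> V \<and> v \<in> V \<and> u \<noteq> v \<and> E v u)"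

definition neighbours :: "'a set \<Rightarrow> ('a \<Rightarrow> 'a \<Rightarrow> bool) \<Rightarrow> 'a \<Rightarrow> 'a set" where
  "neighbours V E v = {u \<in> V. E v u}"

definition degree :: "'a set \<Rightarrow> ('a \<Rightarrow> 'a \<Rightarrow> bool) \<Rightarrow> 'a \<Rightarrow> nat" where
  "degree V E v = card (neighbours V E v)"

definition cliques_in :: "('a \<Rightarrow> 'a \<Rightarrow> bool) \<Rightarrow> 'a set \<Rightarrow> nat \<Rightarrow> 'a set set" where
  "cliques_in E S k = {K. K \<subseteq> S \<and> card K = k \<and> (\<forall>x\<in>K. \<forall>y\<in>K. x \<noteq> y \<longrightarrow> E x y)}"

definition Kr_free :: "'a set \<Rightarrow> ('a \<Rightarrow> 'a \<Rightarrow> bool) \<Rightarrow> nat \<Rightarrow> bool" where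
  "Kr_free V E r \<longleftrightarrow> cliques_in E V r = {}"

definition add_edge :: "('a \<Rightarrow> 'a \<Rightarrow> bool) \<Rightarrow> 'a \<Rightarrow> 'a \<Rightarrow> ('a \<Rightarrow> 'a \<Rightarrow> bool)" where
  "add_edge E u v = (\<lambda>x y. E x y \<or> (x = u \<and> y = v) \<or> (x = v \<and> y = u))"

definition maximal_Kr_free :: "'a set \<Rightarrow> ('a \<Rightarrow> 'a \<Rightarrow> bool) \<Rightarrow> nat \<Rightarrow> bool" where
  "maximal_Kr_free V E r \<longleftrightarrow> Kr_free V E r \<and>
     (\<forall>u\<in>V. \<forall>v\<in>V. u \<noteq> v \<longrightarrow> \<not> E u v \<longrightarrow> \<not> Kr_free V (add_edge E u v) r)"

definition ultra_maximal_Kr_free :: "real \<Rightarrow> 'a set \<Rightarrow> ('a \<Rightarrow> 'a \<Rightarrow> bool) \<Rightarrow> nat \<Rightarrow> bool" where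
  "ultra_maximal_Kr_free \<alpha> V E r \<longleftrightarrow> Kr_free V E r \<and>
     (\<forall>u\<in>V. \<forall>v\<in>V. u \<noteq> v \<longrightarrow> \<not> E u v \<longrightarrow>
        real (card (cliques_in E (neighbours V E u \<inter> neighbours V E v) (r - 2)))
          \<ge> \<alpha> * real (card V) ^ (r - 2))"

end

theory Submission
  imports Defs
begin

(* Fix non-adjacent vertices u, v and let W be their common neighbourhood; by maximality W
   contains a K_{r-2}.  Let A_j be the family of j-subsets of (r-2)-cliques of W.  Given Q in A_j
   inside such a clique K, sum the degrees of the r vertices of {u, v} \<union> K with weight 2 on Q
   and 1 elsewhere.  Since {u} \<union> K and {v} \<union> K are copies of K_{r-1}, no vertex is adjacent to
   all of either, so every vertex misses weight at least 2 of them, except the vertices y missing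
   exactly one vertex x of K - Q.  The minimum degree bound leaves at least (j + 1) \<epsilon> n such y,
   and swapping y for x shows Q \<union> {y} \<in> A_(j+1).  Double counting the pairs Q \<subseteq> Q' then gives
   |A_(j+1)| \<ge> \<epsilon> n |A_j|, hence W contains at least (\<epsilon> n)^(r-2) copies of K_{r-2}. *)

lemma card_mult_le_double_counting:
  fixes a :: real and b :: nat
  assumes "finite A" "finite B"
    and lower: "\<And>x. x \<in> A \<Longrightarrow> a \<le> real (card {y\<in>B. R x y})"
    and upper: "\<And>y. y \<in> B \<Longrightarrow> card {x\<in>A. R x y} \<le> b"
  shows "real (card A) * a \<le> real (card B) * real b"
proof -
  have "real (card A) * a = (\<Sum>x\<in>A. a)" by simp
  also have "\<dots> \<le> (\<Sum>x\<in>A. real (card {y\<in>B. R x y}))" using lower by (rule sum_mono)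
  also have "\<dots> = (\<Sum>x\<in>A. \<Sum>y\<in>B. of_bool (R x y))"
    using assms(2) by (simp add: Collect_conj_eq Int_commute)
  also have "\<dots> = (\<Sum>y\<in>B. \<Sum>x\<in>A. of_bool (R x y))" by (rule sum.swap)
  also have "\<dots> = (\<Sum>y\<in>B. real (card {x\<in>A. R x y}))"
    using assms(1) by (simp add: Collect_conj_eq Int_commute)
  also have "\<dots> \<le> (\<Sum>y\<in>B. real b)" using upper by (intro sum_mono) simp
  finally show ?thesis by simp
qed

definition common_neighbours :: "'a set \<Rightarrow> ('a \<Rightarrow> 'a \<Rightarrow> bool) \<Rightarrow> 'a \<Rightarrow> 'a \<Rightarrow> 'a set" where
  "common_neighbours V E u v = neighbours V E u \<inter> neighbours V E v"

definition subcliques :: "('a \<Rightarrow> 'a \<Rightarrow> bool) \<Rightarrow> 'a set \<Rightarrow> nat \<Rightarrow> nat \<Rightarrow> 'a set set" where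
  "subcliques E S k j = {Q. \<exists>K\<in>cliques_in E S k. Q \<subseteq> K \<and> card Q = j}"

lemma cliques_in_mono: "S \<subseteq> T \<Longrightarrow> cliques_in E S k \<subseteq> cliques_in E T k"
  by (auto simp: cliques_in_def)

lemma finite_subcliques: "finite S \<Longrightarrow> finite (subcliques E S k j)"
  by (rule finite_subset[of _ "Pow S"]) (auto simp: subcliques_def cliques_in_def)

lemma subcliques_self:
  assumes "finite S"
  shows "subcliques E S k k = cliques_in E S k"
proof (intro equalityI subsetI)
  fix Q assume "Q \<in> subcliques E S k k"
  then obtain K where K: "K \<in> cliques_in E S k" "Q \<subseteq> K" "card Q = k"
    by (auto simp: subcliques_def)
  then have "finite K" "card K = k"
    using assms finite_subset by (auto simp: cliques_in_def)
  with K have "Q = K" by (metis card_subset_eq)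
  with K show "Q \<in> cliques_in E S k" by simp
qed (auto simp: subcliques_def cliques_in_def)

lemma empty_in_subcliques: "cliques_in E S k \<noteq> {} \<Longrightarrow> {} \<in> subcliques E S k 0"
  by (auto simp: subcliques_def)

lemma subcliques_card_ge_power:
  fixes m :: real
  assumes "finite S" and "cliques_in E S k \<noteq> {}" and "0 \<le> m"
    and extend: "\<And>j Q. j < k \<Longrightarrow> Q \<in> subcliques E S k j \<Longrightarrow>
                   real (Suc j) * m \<le> real (card {Q'\<in>subcliques E S k (Suc j). Q \<subseteq> Q'})"
    and "j \<le> k"
  shows "m ^ j \<le> real (card (subcliques E S k j))"
  using \<open>j \<le> k\<close>
proof (induction j)
  case 0
  have "subcliques E S k 0 \<noteq> {}" using assms(2) by (blast intro: empty_in_subcliques)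
  then have "card (subcliques E S k 0) \<noteq> 0"
    using assms(1) by (simp add: finite_subcliques)
  then show ?case by simp
next
  case (Suc j)
  have below: "card {Q\<in>subcliques E S k j. Q \<subseteq> Q'} \<le> Suc j"
    if "Q' \<in> subcliques E S k (Suc j)" for Q'
  proof -
    have "card Q' = Suc j" using that by (auto simp: subcliques_def)
    then have "finite Q'" by (metis card.infinite nat.distinct(1))
    have "card {Q\<in>subcliques E S k j. Q \<subseteq> Q'} \<le> card {B. B \<subseteq> Q' \<and> card B = j}"
      using \<open>finite Q'\<close> by (intro card_mono) (auto simp: subcliques_def)
    also have "\<dots> = Suc j"
      using \<open>finite Q'\<close> \<open>card Q' = Suc j\<close> by (simp add: n_subsets binomial_symmetric[of j "Suc j"])
    finally show ?thesis .
  qed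
  have "real (card (subcliques E S k j)) * (real (Suc j) * m)
      \<le> real (card (subcliques E S k (Suc j))) * real (Suc j)"
  proof (rule card_mult_le_double_counting[where R = "(\<subseteq>)"])
    show "finite (subcliques E S k j)" "finite (subcliques E S k (Suc j))"
      using assms(1) by (simp_all add: finite_subcliques)
    show "real (Suc j) * m \<le> real (card {Q'\<in>subcliques E S k (Suc j). Q \<subseteq> Q'})"
      if "Q \<in> subcliques E S k j" for Q
      using that Suc.prems by (intro extend) auto
  qed (rule below)
  then have "real (Suc j) * (real (card (subcliques E S k j)) * m)
      \<le> real (Suc j) * real (card (subcliques E S k (Suc j)))"
    by (simp only: mult_ac)
  then have step: "real (card (subcliques E S k j)) * m \<le> real (card (subcliques E S k (Suc j)))"
    by (rule mult_left_le_imp_le) simp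
  have "m ^ Suc j = m * m ^ j" by simp
  also have "\<dots> \<le> m * real (card (subcliques E S k j))"
    using Suc \<open>0 \<le> m\<close> by (simp add: mult_left_mono)
  also have "\<dots> \<le> real (card (subcliques E S k (Suc j)))"
    using step by (simp add: mult.commute)
  finally show ?case .
qed

locale simple_graph =
  fixes V :: "'a set" and E :: "'a \<Rightarrow> 'a \<Rightarrow> bool"
  assumes graph: "graph V E"
begin

lemma finite_V: "finite V"
  using graph by (simp add: graph_def)

lemma edge_sym: "E x y \<Longrightarrow> E y x"
  using graph by (simp add: graph_def)

lemma edge_irrefl: "\<not> E x x"
  using graph by (auto simp: graph_def)

lemma weighted_degree_sum:
  fixes w :: "'a \<Rightarrow> real"
  assumes "finite C"
  shows "(\<Sum>x\<in>C. w x * real (degree V E x)) = (\<Sum>y\<in>V. sum w {x\<in>C. E y x})"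
proof -
  have "neighbours V E x = V \<inter> {y. E y x}" for x
    using edge_sym by (auto simp: neighbours_def)
  then have "real (degree V E x) = (\<Sum>y\<in>V. of_bool (E y x))" for x
    using finite_V by (simp add: degree_def)
  then have "(\<Sum>x\<in>C. w x * real (degree V E x)) = (\<Sum>x\<in>C. \<Sum>y\<in>V. w x * of_bool (E y x))"
    by (simp add: sum_distrib_left)
  also have "\<dots> = (\<Sum>y\<in>V. \<Sum>x\<in>C. w x * of_bool (E y x))" by (rule sum.swap)
  also have "\<dots> = (\<Sum>y\<in>V. sum w {x\<in>C. E y x})"
    using assms by (simp add: Collect_conj_eq Int_commute)
  finally show ?thesis .
qed

lemma cliques_in_insert:
  assumes "K \<in> cliques_in E S k" "S \<subseteq> V" "x \<in> S" "x \<notin> K" "\<forall>z\<in>K. E x z"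
  shows "insert x K \<in> cliques_in E S (Suc k)"
proof -
  have "finite K" using assms(1,2) finite_V by (auto simp: cliques_in_def intro: finite_subset)
  then show ?thesis using assms edge_sym by (auto simp: cliques_in_def)
qed

lemma clique_has_nonneighbour:
  assumes "Kr_free V E (Suc k)" "K \<in> cliques_in E V k" "y \<in> V"
  shows "\<exists>z\<in>K. \<not> E y z"
proof (rule ccontr)
  assume "\<not> ?thesis"
  moreover from this have "y \<notin> K" using edge_irrefl by blast
  ultimately have "insert y K \<in> cliques_in E V (Suc k)"
    using assms(2,3) by (intro cliques_in_insert) auto
  then show False using assms(1) by (simp add: Kr_free_def)
qed

lemma not_in_common_neighbours: "u \<notin> common_neighbours V E u v"
  using edge_irrefl by (simp add: common_neighbours_def neighbours_def)

lemma common_neighbours_commute: "common_neighbours V E u v = common_neighbours V E v u"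
  by (auto simp: common_neighbours_def)

lemma common_neighbours_subset: "common_neighbours V E u v \<subseteq> V"
  by (auto simp: common_neighbours_def neighbours_def)

lemma insert_common_neighbours_clique:
  assumes "u \<in> V" "K \<in> cliques_in E (common_neighbours V E u v) k"
  shows "insert u K \<in> cliques_in E V (Suc k)"
proof (rule cliques_in_insert)
  show "K \<in> cliques_in E V k"
    using assms(2) cliques_in_mono[OF common_neighbours_subset] by blast
  show "u \<notin> K" "\<forall>z\<in>K. E u z"
    using assms(2) not_in_common_neighbours
    by (auto simp: cliques_in_def common_neighbours_def neighbours_def)
qed (use assms in auto)

lemma common_neighbours_cliqueD:
  assumes "K \<in> cliques_in E (common_neighbours V E u v) k"
  shows "finite K" "card K = k" "u \<notin> K" "v \<notin> K"
proof -
  have "K \<subseteq> common_neighbours V E u v" "card K = k" using assms by (auto simp: cliques_in_def)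
  then show "finite K" "card K = k" "u \<notin> K" "v \<notin> K"
    using finite_V common_neighbours_subset not_in_common_neighbours common_neighbours_commute
    by (metis finite_subset subset_trans subsetD)+
qed

definition swap_vertices :: "'a \<Rightarrow> 'a \<Rightarrow> 'a set \<Rightarrow> 'a set \<Rightarrow> 'a set" where
  "swap_vertices u v K Q = {y\<in>V. \<exists>x\<in>K - Q. {z\<in>insert u (insert v K). \<not> E y z} = {x}}"

lemma swap_vertex_extends:
  assumes y: "y \<in> swap_vertices u v K Q"
    and K: "K \<in> cliques_in E (common_neighbours V E u v) k" and "Q \<subseteq> K"
  shows "y \<notin> Q" and "insert y Q \<in> subcliques E (common_neighbours V E u v) k (Suc (card Q))"
proof -
  let ?W = "common_neighbours V E u v"
  obtain x where x: "x \<in> K - Q" and miss: "{z\<in>insert u (insert v K). \<not> E y z} = {x}"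
    and "y \<in> V"
    using y by (auto simp: swap_vertices_def)
  note K_facts = common_neighbours_cliqueD[OF K]
  have adj: "E y z" if "z \<in> insert u (insert v K)" "z \<noteq> x" for z
    using miss that by blast
  have "y \<in> ?W"
    using adj[of u] adj[of v] x \<open>u \<notin> K\<close> \<open>v \<notin> K\<close> \<open>y \<in> V\<close> edge_sym
    by (auto simp: common_neighbours_def neighbours_def)
  have "K - {x} \<in> cliques_in E ?W (k - 1)"
    using K x \<open>finite K\<close> by (auto simp: cliques_in_def)
  moreover have "y \<notin> K - {x}" using adj edge_irrefl by blast
  ultimately have "insert y (K - {x}) \<in> cliques_in E ?W (Suc (k - 1))"
    using adj \<open>y \<in> ?W\<close> common_neighbours_subset by (intro cliques_in_insert) auto
  moreover have "Suc (k - 1) = k"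
    using x \<open>finite K\<close> \<open>card K = k\<close> by (metis DiffD1 Suc_pred' card_gt_0_iff empty_iff)
  ultimately have clique: "insert y (K - {x}) \<in> cliques_in E ?W k" by simp
  show "y \<notin> Q" using adj x assms(3) edge_irrefl by blast
  moreover have "finite Q" using assms(3) \<open>finite K\<close> finite_subset by blast
  ultimately have "card (insert y Q) = Suc (card Q)" by simp
  moreover have "insert y Q \<subseteq> insert y (K - {x})" using x assms(3) by blast
  ultimately show "insert y Q \<in> subcliques E ?W k (Suc (card Q))"
    using clique by (auto simp: subcliques_def)
qed

lemma common_neighbours_clique_has_nonneighbour:
  assumes "Kr_free V E (k + 2)" "u \<in> V" "K \<in> cliques_in E (common_neighbours V E u v) k" "y \<in> V"
  shows "\<exists>z\<in>insert u K. \<not> E y z"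
  using clique_has_nonneighbour[OF _ insert_common_neighbours_clique[OF assms(2,3)] assms(4)] assms(1)
  by simp

lemma nonneighbours_card_ge:
  assumes free: "Kr_free V E (k + 2)" and "u \<in> V" "v \<in> V" "u \<noteq> v"
    and K: "K \<in> cliques_in E (common_neighbours V E u v) k" and "y \<in> V"
  defines "N \<equiv> {z\<in>insert u (insert v K). \<not> E y z}"
  shows "2 \<le> card N + card (N \<inter> Q) + of_bool (y \<in> swap_vertices u v K Q)"
proof -
  note K_facts = common_neighbours_cliqueD[OF K]
  have "finite N" using \<open>finite K\<close> by (simp add: N_def)
  obtain a where a: "a \<in> N" "a \<in> insert u K"
    using common_neighbours_clique_has_nonneighbour[OF free assms(2) K \<open>y \<in> V\<close>]
    by (auto simp: N_def)
  obtain b where b: "b \<in> N" "b \<in> insert v K"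
    using common_neighbours_clique_has_nonneighbour[OF free assms(3)
        K[unfolded common_neighbours_commute[of u v]] \<open>y \<in> V\<close>]
    by (auto simp: N_def)
  show ?thesis
  proof (cases "N = {a}")
    case True
    then have "a \<in> K" using a b \<open>u \<noteq> v\<close> by auto
    then show ?thesis
      using True \<open>y \<in> V\<close> by (auto simp: swap_vertices_def N_def)
  next
    case False
    with a(1) obtain c where "c \<in> N" "c \<noteq> a" by blast
    then have "2 \<le> card N"
      using a(1) \<open>finite N\<close> by (metis card_2_iff card_mono empty_subsetI insert_subset)
    then show ?thesis by simp
  qed
qed

lemma swap_vertices_card_ge:
  assumes free: "Kr_free V E (k + 2)" and "u \<in> V" "v \<in> V" "u \<noteq> v"
    and K: "K \<in> cliques_in E (common_neighbours V E u v) k" and "Q \<subseteq> K"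
    and min_degree: "\<forall>x\<in>V. \<delta> \<le> real (degree V E x)"
  shows "(real k + real (card Q) + 2) * \<delta>
           \<le> (real k + real (card Q)) * real (card V) + real (card (swap_vertices u v K Q))"
proof -
  define C where "C = insert u (insert v K)"
  define w :: "'a \<Rightarrow> real" where "w x = 1 + of_bool (x \<in> Q)" for x
  define j where "j = real k + real (card Q)"
  have weight: "sum w A = real (card A) + real (card (A \<inter> Q))" if "finite A" for A
    using that by (simp add: w_def sum.distrib)
  note K_facts = common_neighbours_cliqueD[OF K]
  have "finite C" "C \<subseteq> V"
    using K_facts K common_neighbours_subset assms(2,3) by (auto simp: C_def cliques_in_def)
  have "card C = k + 2" "C \<inter> Q = Q"
    using K_facts assms(4,6) by (auto simp: C_def)
  then have total: "sum w C = j + 2" using weight[OF \<open>finite C\<close>] by (simp add: j_def)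
  have "sum w {x\<in>C. E y x} \<le> j + of_bool (y \<in> swap_vertices u v K Q)" if "y \<in> V" for y
  proof -
    have "sum w C = sum w {x\<in>C. E y x} + sum w {x\<in>C. \<not> E y x}"
      using sum.Int_Diff[OF \<open>finite C\<close>, of w "{x. E y x}"] by (simp add: set_diff_eq Int_def)
    moreover have "2 \<le> sum w {x\<in>C. \<not> E y x} + of_bool (y \<in> swap_vertices u v K Q)"
      using nonneighbours_card_ge[OF free assms(2-4) K that, of Q] weight[of "{x\<in>C. \<not> E y x}"]
        \<open>finite C\<close> unfolding C_def by (simp add: of_bool_def split: if_splits)
    ultimately show ?thesis using total by linarith
  qed
  then have "(\<Sum>y\<in>V. sum w {x\<in>C. E y x}) \<le> (\<Sum>y\<in>V. j + of_bool (y \<in> swap_vertices u v K Q))"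
    by (rule sum_mono)
  also have "\<dots> = j * real (card V) + real (card (swap_vertices u v K Q))"
    using finite_V by (simp add: sum.distrib Int_absorb1 swap_vertices_def Collect_conj_eq)
  finally have upper: "(\<Sum>x\<in>C. w x * real (degree V E x))
      \<le> j * real (card V) + real (card (swap_vertices u v K Q))"
    by (simp only: weighted_degree_sum[OF \<open>finite C\<close>])
  have "(j + 2) * \<delta> = (\<Sum>x\<in>C. w x * \<delta>)" by (simp add: total flip: sum_distrib_right)
  also have "\<dots> \<le> (\<Sum>x\<in>C. w x * real (degree V E x))"
    using min_degree \<open>C \<subseteq> V\<close> by (intro sum_mono mult_left_mono) (auto simp: w_def)
  finally show ?thesis using upper by (simp add: j_def)
qed

lemma subcliques_supersets_card_ge:
  assumes "Kr_free V E r" "2 \<le> r" "u \<in> V" "v \<in> V" "u \<noteq> v"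
    and Q: "Q \<in> subcliques E (common_neighbours V E u v) (r - 2) j"
    and "\<forall>x\<in>V. \<delta> \<le> real (degree V E x)"
  shows "(real r + real j) * \<delta> - (real r + real j - 2) * real (card V)
           \<le> real (card {Q'\<in>subcliques E (common_neighbours V E u v) (r - 2) (Suc j). Q \<subseteq> Q'})"
proof -
  let ?W = "common_neighbours V E u v"
  obtain K where K: "K \<in> cliques_in E ?W (r - 2)" "Q \<subseteq> K" and "card Q = j"
    using Q by (auto simp: subcliques_def)
  have "inj_on (\<lambda>y. insert y Q) (swap_vertices u v K Q)"
    using swap_vertex_extends(1)[OF _ K] by (auto intro!: inj_onI simp: insert_ident)
  moreover have "(\<lambda>y. insert y Q) ` swap_vertices u v K Q
      \<subseteq> {Q'\<in>subcliques E ?W (r - 2) (Suc j). Q \<subseteq> Q'}"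
    using swap_vertex_extends(2)[OF _ K] \<open>card Q = j\<close> by auto
  moreover have "finite (subcliques E ?W (r - 2) (Suc j))"
    using finite_V common_neighbours_subset by (metis finite_subcliques finite_subset)
  ultimately have "real (card (swap_vertices u v K Q))
      \<le> real (card {Q'\<in>subcliques E ?W (r - 2) (Suc j). Q \<subseteq> Q'})"
    by (intro of_nat_mono card_inj_on_le) auto
  moreover have "Kr_free V E (r - 2 + 2)" using assms(1,2) by (simp only: le_add_diff_inverse2)
  note swap_vertices_card_ge[OF this assms(3-5) K assms(7), unfolded \<open>card Q = j\<close>]
  moreover have "real (r - 2) = real r - 2" using assms(2) by simp
  ultimately show ?thesis by (simp add: algebra_simps)
qed

lemma maximal_Kr_free_common_neighbours_clique:
  assumes max: "maximal_Kr_free V E r" and "u \<in> V" "v \<in> V" "u \<noteq> v" "\<not> E u v"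
  shows "cliques_in E (common_neighbours V E u v) (r - 2) \<noteq> {}"
proof -
  have "\<not> Kr_free V (add_edge E u v) r" using max assms(2-5) by (simp add: maximal_Kr_free_def)
  then obtain S where S: "S \<subseteq> V" "card S = r"
    and clique: "\<forall>x\<in>S. \<forall>y\<in>S. x \<noteq> y \<longrightarrow> add_edge E u v x y"
    by (auto simp: Kr_free_def cliques_in_def)
  have "u \<in> S \<and> v \<in> S"
  proof (rule ccontr)
    assume "\<not> (u \<in> S \<and> v \<in> S)"
    then have "S \<in> cliques_in E V r" using S clique by (auto simp: cliques_in_def add_edge_def)
    then show False using max by (simp add: maximal_Kr_free_def Kr_free_def)
  qed
  moreover have "finite S" using S finite_V finite_subset by blast
  ultimately have "card (S - {u, v}) = r - 2" using S assms(4) by (simp add: card_Diff_subset)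
  moreover have "S - {u, v} \<subseteq> common_neighbours V E u v"
    using S clique \<open>u \<in> S \<and> v \<in> S\<close> edge_sym
    by (fastforce simp: add_edge_def common_neighbours_def neighbours_def)
  moreover have "\<forall>x\<in>S - {u, v}. \<forall>y\<in>S - {u, v}. x \<noteq> y \<longrightarrow> E x y"
    using clique by (auto simp: add_edge_def)
  ultimately have "S - {u, v} \<in> cliques_in E (common_neighbours V E u v) (r - 2)"
    by (simp add: cliques_in_def)
  then show ?thesis by blast
qed

end

lemma min_degree_excess:
  fixes r j :: nat and \<epsilon> n \<delta> :: real
  assumes "j + 3 \<le> r" "0 \<le> \<epsilon>" "0 \<le> n"
    and "((2 * real r - 5) / (2 * real r - 3) + \<epsilon>) * n \<le> \<delta>"
  shows "real (Suc j) * (\<epsilon> * n) \<le> (real r + real j) * \<delta> - (real r + real j - 2) * n"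
proof -
  have "0 < 2 * real r - 3" using assms(1) by simp
  then have "(real r + real j) * ((2 * real r - 5) / (2 * real r - 3)) - (real r + real j - 2)
      = (2 * real r - 6 - 2 * real j) / (2 * real r - 3)"
    by (simp add: field_simps)
  also have "\<dots> \<ge> 0" using assms(1) \<open>0 < 2 * real r - 3\<close> by simp
  finally have slack: "0 \<le> ((real r + real j) * ((2 * real r - 5) / (2 * real r - 3))
      - (real r + real j - 2)) * n"
    using assms(3) by simp
  have "real (Suc j) * (\<epsilon> * n) \<le> (real r + real j) * (\<epsilon> * n)"
    using assms by (intro mult_right_mono) auto
  also have "\<dots> \<le> (real r + real j) * (((2 * real r - 5) / (2 * real r - 3) + \<epsilon>) * n)
      - (real r + real j - 2) * n"
    using slack by (simp add: algebra_simps)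
  also have "\<dots> \<le> (real r + real j) * \<delta> - (real r + real j - 2) * n"
    using assms(4) by (simp add: mult_left_mono)
  finally show ?thesis .
qed

theorem proposition4p3:
  fixes V :: "'a set" and E :: "'a \<Rightarrow> 'a \<Rightarrow> bool" and r :: nat and \<epsilon> :: real
  assumes "graph V E"
    and "r \<ge> 3"
    and "\<epsilon> > 0"
    and "maximal_Kr_free V E r"
    and "\<forall>v\<in>V. real (degree V E v) \<ge>
           ((2 * real r - 5) / (2 * real r - 3) + \<epsilon>) * real (card V)"
  shows "ultra_maximal_Kr_free (\<epsilon> ^ (r - 2)) V E r"
proof -
  interpret simple_graph V E by unfold_locales (rule assms(1))
  have free: "Kr_free V E r" using assms(4) by (simp add: maximal_Kr_free_def)
  show ?thesis
    unfolding ultra_maximal_Kr_free_def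
  proof (intro conjI ballI impI free)
    fix u v assume uv: "u \<in> V" "v \<in> V" "u \<noteq> v" "\<not> E u v"
    let ?W = "common_neighbours V E u v"
    have "finite ?W" using finite_V common_neighbours_subset by (rule finite_subset[rotated])
    have "(\<epsilon> * real (card V)) ^ (r - 2) \<le> real (card (subcliques E ?W (r - 2) (r - 2)))"
    proof (rule subcliques_card_ge_power[OF \<open>finite ?W\<close>])
      show "cliques_in E ?W (r - 2) \<noteq> {}"
        using maximal_Kr_free_common_neighbours_clique[OF assms(4) uv] .
      show "0 \<le> \<epsilon> * real (card V)" using assms(3) by simp
      show "real (Suc j) * (\<epsilon> * real (card V)) \<le> real (card {Q'\<in>subcliques E ?W (r - 2) (Suc j). Q \<subseteq> Q'})"
        if "j < r - 2" "Q \<in> subcliques E ?W (r - 2) j" for j Q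
      proof (rule order_trans)
        show "real (Suc j) * (\<epsilon> * real (card V))
            \<le> (real r + real j) * (((2 * real r - 5) / (2 * real r - 3) + \<epsilon>) * real (card V))
              - (real r + real j - 2) * real (card V)"
          using that(1) assms(3) by (intro min_degree_excess) auto
      qed (use subcliques_supersets_card_ge[OF free _ uv(1-3) that(2) assms(5)] assms(2) in simp)
    qed simp
    then show "\<epsilon> ^ (r - 2) * real (card V) ^ (r - 2)
        \<le> real (card (cliques_in E (neighbours V E u \<inter> neighbours V E v) (r - 2)))"
      using subcliques_self[OF \<open>finite ?W\<close>]
      by (simp add: power_mult_distrib common_neighbours_def)
  qed
qed

end
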